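(* Let $T=(T,\eta,\mu)$ be a Kock–Zöberlein monad on a poset-enriched category $\mathcal{A}$, let $a\colon T(X)\to X$ be a $T$-algebra, and let $c\colon X\to T(X)$ be a map of algebras from $a$ to $\overline{T}(a)=\mu_X$ (i.e. $c\circ a=\mu_X\circ T(c)$). The following are equivalent: (1) $c$ is an Eilenberg–Moore coalgebra of the comonad $\overline{T}$ on $a$ (i.e. additionally $a\circ c=\mathrm{id}_X$ and $T(\eta_X)\circ c=T(c)\circ c$); (2) $a\circ c=\mathrm{id}_X$ and $c\circ a\le\mathrm{id}_{T(X)}$, i.e. $c$ is a left adjoint right inverse of the counit $a$ (a coreflection $c\dashv a$).
   Context: A poset-enriched category has hom-posets with monotone composition; $f\dashv g$ means $\mathrm{id}\le g\circ f$ and $f\circ g\le\mathrm{id}$. A monad $T$ is Kock–Zöberlein if it is monotone on hom-posets and $T(\eta_X)\le\eta_{T(X)}$ for all $X$. $\overline{T}$ is the comonad on the category of $T$-algebras (also poset-enriched) induced by the free-algebra adjunction: $\overline{T}(a)=\mu_X\colon T^2X\to TX$ for $a\colon TX\to X$, with counit $a\colon\overline{T}(a)\to a$ and comultiplication $T(\eta_X)$. *)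

theory Defs
  imports Main
begin

locale poset_cat =
  fixes Obj :: "'o set"
    and hom :: "'o \<Rightarrow> 'o \<Rightarrow> 'a set"
    and cmp :: "'a \<Rightarrow> 'a \<Rightarrow> 'a"
    and idt :: "'o \<Rightarrow> 'a"
    and le  :: "'a \<Rightarrow> 'a \<Rightarrow> bool"
  assumes idt_hom: "X \<in> Obj \<Longrightarrow> idt X \<in> hom X X"
    and cmp_hom: "\<lbrakk>X \<in> Obj; Y \<in> Obj; Z \<in> Obj; f \<in> hom X Y; g \<in> hom Y Z\<rbrakk>
                  \<Longrightarrow> cmp g f \<in> hom X Z"
    and idt_left: "\<lbrakk>X \<in> Obj; Y \<in> Obj; f \<in> hom X Y\<rbrakk> \<Longrightarrow> cmp (idt Y) f = f"
    and idt_right: "\<lbrakk>X \<in> Obj; Y \<in> Obj; f \<in> hom X Y\<rbrakk> \<Longrightarrow> cmp f (idt X) = f"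
    and cmp_assoc: "\<lbrakk>W \<in> Obj; X \<in> Obj; Y \<in> Obj; Z \<in> Obj;
                     f \<in> hom W X; g \<in> hom X Y; h \<in> hom Y Z\<rbrakk>
                    \<Longrightarrow> cmp h (cmp g f) = cmp (cmp h g) f"
    and le_refl: "\<lbrakk>X \<in> Obj; Y \<in> Obj; f \<in> hom X Y\<rbrakk> \<Longrightarrow> le f f"
    and le_trans: "\<lbrakk>X \<in> Obj; Y \<in> Obj; f \<in> hom X Y; g \<in> hom X Y; h \<in> hom X Y;
                    le f g; le g h\<rbrakk> \<Longrightarrow> le f h"
    and le_antisym: "\<lbrakk>X \<in> Obj; Y \<in> Obj; f \<in> hom X Y; g \<in> hom X Y;
                      le f g; le g f\<rbrakk> \<Longrightarrow> f = g"
    and cmp_mono: "\<lbrakk>X \<in> Obj; Y \<in> Obj; Z \<in> Obj; f \<in> hom X Y; f' \<in> hom X Y;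
                    g \<in> hom Y Z; g' \<in> hom Y Z; le f f'; le g g'\<rbrakk>
                   \<Longrightarrow> le (cmp g f) (cmp g' f')"

locale pc_monad = poset_cat Obj hom cmp idt le
  for Obj :: "'o set"
    and hom :: "'o \<Rightarrow> 'o \<Rightarrow> 'a set"
    and cmp :: "'a \<Rightarrow> 'a \<Rightarrow> 'a"
    and idt :: "'o \<Rightarrow> 'a"
    and le  :: "'a \<Rightarrow> 'a \<Rightarrow> bool" +
  fixes TO :: "'o \<Rightarrow> 'o"
    and TA :: "'a \<Rightarrow> 'a"
    and eta :: "'o \<Rightarrow> 'a"
    and mu :: "'o \<Rightarrow> 'a"
  assumes TO_Obj: "X \<in> Obj \<Longrightarrow> TO X \<in> Obj"
    and TA_hom: "\<lbrakk>X \<in> Obj; Y \<in> Obj; f \<in> hom X Y\<rbrakk> \<Longrightarrow> TA f \<in> hom (TO X) (TO Y)"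
    and TA_idt: "X \<in> Obj \<Longrightarrow> TA (idt X) = idt (TO X)"
    and TA_cmp: "\<lbrakk>X \<in> Obj; Y \<in> Obj; Z \<in> Obj; f \<in> hom X Y; g \<in> hom Y Z\<rbrakk>
                 \<Longrightarrow> TA (cmp g f) = cmp (TA g) (TA f)"
    and eta_hom: "X \<in> Obj \<Longrightarrow> eta X \<in> hom X (TO X)"
    and eta_nat: "\<lbrakk>X \<in> Obj; Y \<in> Obj; f \<in> hom X Y\<rbrakk>
                  \<Longrightarrow> cmp (TA f) (eta X) = cmp (eta Y) f"
    and mu_hom: "X \<in> Obj \<Longrightarrow> mu X \<in> hom (TO (TO X)) (TO X)"
    and mu_nat: "\<lbrakk>X \<in> Obj; Y \<in> Obj; f \<in> hom X Y\<rbrakk>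
                 \<Longrightarrow> cmp (TA f) (mu X) = cmp (mu Y) (TA (TA f))"
    and mu_eta_T: "X \<in> Obj \<Longrightarrow> cmp (mu X) (eta (TO X)) = idt (TO X)"
    and mu_T_eta: "X \<in> Obj \<Longrightarrow> cmp (mu X) (TA (eta X)) = idt (TO X)"
    and mu_assoc: "X \<in> Obj \<Longrightarrow> cmp (mu X) (mu (TO X)) = cmp (mu X) (TA (mu X))"

locale KZ_monad = pc_monad Obj hom cmp idt le TO TA eta mu
  for Obj :: "'o set"
    and hom :: "'o \<Rightarrow> 'o \<Rightarrow> 'a set"
    and cmp :: "'a \<Rightarrow> 'a \<Rightarrow> 'a"
    and idt :: "'o \<Rightarrow> 'a"
    and le  :: "'a \<Rightarrow> 'a \<Rightarrow> bool"
    and TO :: "'o \<Rightarrow> 'o"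
    and TA :: "'a \<Rightarrow> 'a"
    and eta :: "'o \<Rightarrow> 'a"
    and mu :: "'o \<Rightarrow> 'a" +
  assumes TA_mono: "\<lbrakk>X \<in> Obj; Y \<in> Obj; f \<in> hom X Y; g \<in> hom X Y; le f g\<rbrakk>
                    \<Longrightarrow> le (TA f) (TA g)"
    and KZ: "X \<in> Obj \<Longrightarrow> le (TA (eta X)) (eta (TO X))"

definition T_algebra where
  "T_algebra Obj hom cmp idt TO TA eta mu X a \<longleftrightarrow>
     X \<in> Obj \<and> a \<in> hom (TO X) X \<and> cmp a (eta X) = idt X \<and> cmp a (mu X) = cmp a (TA a)"

end

theory Submission
  imports Defs
begin

text \<open>For a retraction a of eta X, the KZ inequality T(eta X) \<le> eta (T X), transported
  along naturality of eta, gives id \<le> eta X \<circ> a; hence every section c of a lies below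
  eta X. This single inequality c \<le> eta X yields both c \<circ> a \<le> id (apply mu X \<circ> T(-) and
  use that c is an algebra map) and T(eta X) \<circ> c = T c \<circ> c (one inequality from
  monotonicity of T, the other from T(eta X) \<circ> mu X \<le> id).\<close>

context poset_cat
begin

lemma cmp_mono_left:
  assumes "X \<in> Obj" "Y \<in> Obj" "Z \<in> Obj" "f \<in> hom X Y" "g \<in> hom Y Z" "g' \<in> hom Y Z"
    and "le g g'"
  shows "le (cmp g f) (cmp g' f)"
  using assms by (blast intro: cmp_mono le_refl)

lemma cmp_mono_right:
  assumes "X \<in> Obj" "Y \<in> Obj" "Z \<in> Obj" "f \<in> hom X Y" "f' \<in> hom X Y" "g \<in> hom Y Z"
    and "le f f'"
  shows "le (cmp g f) (cmp g f')"
  using assms by (blast intro: cmp_mono le_refl)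

end

context KZ_monad
begin

lemma idt_le_eta_cmp_retraction:
  assumes X: "X \<in> Obj" and a: "a \<in> hom (TO X) X" and a_eta: "cmp a (eta X) = idt X"
  shows "le (idt (TO X)) (cmp (eta X) a)"
proof -
  have TX: "TO X \<in> Obj" using X by (rule TO_Obj)
  have "idt (TO X) = cmp (TA a) (TA (eta X))"
    using TA_cmp[OF X TX X eta_hom[OF X] a] a_eta TA_idt[OF X] by simp
  also have "le \<dots> (cmp (TA a) (eta (TO X)))"
    by (rule cmp_mono_right[OF TX TO_Obj[OF TX] TX TA_hom[OF X TX eta_hom[OF X]]
          eta_hom[OF TX] TA_hom[OF TX X a] KZ[OF X]])
  also have "cmp (TA a) (eta (TO X)) = cmp (eta X) a"
    using eta_nat[OF TX X a] .
  finally show ?thesis .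
qed

lemma TA_eta_cmp_mu_le_idt:
  assumes X: "X \<in> Obj"
  shows "le (cmp (TA (eta X)) (mu X)) (idt (TO (TO X)))"
proof -
  have TX: "TO X \<in> Obj" and TTX: "TO (TO X) \<in> Obj" using X by (auto intro: TO_Obj)
  have "cmp (TA (eta X)) (mu X) = cmp (mu (TO X)) (TA (TA (eta X)))"
    using mu_nat[OF X TX eta_hom[OF X]] .
  also have "le \<dots> (cmp (mu (TO X)) (TA (eta (TO X))))"
    by (rule cmp_mono_right[OF TTX TO_Obj[OF TTX] TTX TA_hom[OF TX TTX TA_hom[OF X TX eta_hom[OF X]]]
          TA_hom[OF TX TTX eta_hom[OF TX]] mu_hom[OF TX]
          TA_mono[OF TX TTX TA_hom[OF X TX eta_hom[OF X]] eta_hom[OF TX] KZ[OF X]]])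
  also have "cmp (mu (TO X)) (TA (eta (TO X))) = idt (TO (TO X))"
    using mu_T_eta[OF TX] .
  finally show ?thesis .
qed

lemma section_le_eta:
  assumes X: "X \<in> Obj" and a: "a \<in> hom (TO X) X" and a_eta: "cmp a (eta X) = idt X"
    and c: "c \<in> hom X (TO X)" and a_c: "cmp a c = idt X"
  shows "le c (eta X)"
proof -
  have TX: "TO X \<in> Obj" using X by (rule TO_Obj)
  have "c = cmp (idt (TO X)) c" using idt_left[OF X TX c] by simp
  also have "le \<dots> (cmp (cmp (eta X) a) c)"
    by (rule cmp_mono_left[OF X TX TX c idt_hom[OF TX] cmp_hom[OF TX X TX a eta_hom[OF X]]
          idt_le_eta_cmp_retraction[OF X a a_eta]])
  also have "cmp (cmp (eta X) a) c = eta X"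
    using cmp_assoc[OF X TX X TX c a eta_hom[OF X]] a_c idt_right[OF X TX eta_hom[OF X]] by simp
  finally show ?thesis .
qed

lemma section_algebra_map_cmp_le_idt:
  assumes X: "X \<in> Obj" and a: "a \<in> hom (TO X) X" and a_eta: "cmp a (eta X) = idt X"
    and c: "c \<in> hom X (TO X)" and a_c: "cmp a c = idt X"
    and c_alg_map: "cmp c a = cmp (mu X) (TA c)"
  shows "le (cmp c a) (idt (TO X))"
proof -
  have TX: "TO X \<in> Obj" using X by (rule TO_Obj)
  have "le (cmp (mu X) (TA c)) (cmp (mu X) (TA (eta X)))"
    by (rule cmp_mono_right[OF TX TO_Obj[OF TX] TX TA_hom[OF X TX c] TA_hom[OF X TX eta_hom[OF X]]
          mu_hom[OF X] TA_mono[OF X TX c eta_hom[OF X] section_le_eta[OF X a a_eta c a_c]]])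
  then show ?thesis
    using c_alg_map mu_T_eta[OF X] by simp
qed

lemma section_algebra_map_coassoc:
  assumes X: "X \<in> Obj" and a: "a \<in> hom (TO X) X" and a_eta: "cmp a (eta X) = idt X"
    and c: "c \<in> hom X (TO X)" and a_c: "cmp a c = idt X"
    and c_alg_map: "cmp c a = cmp (mu X) (TA c)"
  shows "cmp (TA (eta X)) c = cmp (TA c) c"
proof -
  have TX: "TO X \<in> Obj" and TTX: "TO (TO X) \<in> Obj" using X by (auto intro: TO_Obj)
  have Te: "TA (eta X) \<in> hom (TO X) (TO (TO X))" using TA_hom[OF X TX eta_hom[OF X]] .
  have Tc: "TA c \<in> hom (TO X) (TO (TO X))" using TA_hom[OF X TX c] .
  have Tc_c: "cmp (TA c) c \<in> hom X (TO (TO X))" using cmp_hom[OF X TX TTX c Tc] .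
  have "cmp (TA (eta X)) c = cmp (TA (eta X)) (cmp (cmp c a) c)"
    using cmp_assoc[OF X TX X TX c a c] a_c idt_right[OF X TX c] by simp
  also have "\<dots> = cmp (cmp (TA (eta X)) (mu X)) (cmp (TA c) c)"
    using c_alg_map cmp_assoc[OF X TX TTX TX c Tc mu_hom[OF X]]
      cmp_assoc[OF X TTX TX TTX Tc_c mu_hom[OF X] Te] by simp
  also have "le \<dots> (cmp (idt (TO (TO X))) (cmp (TA c) c))"
    by (rule cmp_mono_left[OF X TTX TTX Tc_c cmp_hom[OF TTX TX TTX mu_hom[OF X] Te]
          idt_hom[OF TTX] TA_eta_cmp_mu_le_idt[OF X]])
  also have "cmp (idt (TO (TO X))) (cmp (TA c) c) = cmp (TA c) c"
    using idt_left[OF X TTX Tc_c] .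
  finally have below: "le (cmp (TA (eta X)) c) (cmp (TA c) c)" .
  have above: "le (cmp (TA c) c) (cmp (TA (eta X)) c)"
    by (rule cmp_mono_left[OF X TX TTX c Tc Te
          TA_mono[OF X TX c eta_hom[OF X] section_le_eta[OF X a a_eta c a_c]]])
  show ?thesis
    by (rule le_antisym[OF X TTX cmp_hom[OF X TX TTX c Te] Tc_c below above])
qed

end

theorem theorem4p2:
  assumes kz: "KZ_monad Obj hom cmp idt le TO TA eta mu"
    and alg: "T_algebra Obj hom cmp idt TO TA eta mu X a"
    and c_hom: "c \<in> hom X (TO X)"
    and c_alg_map: "cmp c a = cmp (mu X) (TA c)"
  shows "(cmp a c = idt X \<and> cmp (TA (eta X)) c = cmp (TA c) c)
         \<longleftrightarrow> (cmp a c = idt X \<and> le (cmp c a) (idt (TO X)))"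
proof -
  interpret KZ_monad Obj hom cmp idt le TO TA eta mu by (rule kz)
  from alg have X: "X \<in> Obj" and a: "a \<in> hom (TO X) X" and a_eta: "cmp a (eta X) = idt X"
    by (auto simp: T_algebra_def)
  show ?thesis
    using section_algebra_map_coassoc[OF X a a_eta c_hom _ c_alg_map]
      section_algebra_map_cmp_le_idt[OF X a a_eta c_hom _ c_alg_map] by blast
qed

end
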